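(* Let $n,k\ge 1$, let $W(k)\subseteq[n]^k$ be a (multi)set of $k$-tuples, let $\mathcal C\subseteq\mathbb F_2^n$ be a linear $\eta_0$-balanced code, and suppose $\mathcal C'=\mathrm{dsum}_{W(k)}(\mathcal C)$ is $\eta$-balanced, where $\eta\in(0,1)$. Let $\tilde y\in\mathbb F_2^{W(k)}$ and define $$\mathcal L=\mathcal L(\tilde y,\mathcal C,\mathcal C')=\Big\{(z,\mathrm{dsum}_{W(k)}(z)) : z\in\mathcal C,\ \Delta(\mathrm{dsum}_{W(k)}(z),\tilde y)\le \tfrac12-\sqrt\eta\Big\}.$$ Let $\zeta<1/2$ and suppose $\mathcal L'$ is a $\zeta$-cover of $\mathcal L$ such that $\Delta(y',\tilde y)\le \frac12-\sqrt\eta$ for every $(z',y')\in\mathcal L'$. If $W(k)$ is a $(1-2\zeta,\eta)$-parity sampler, then there exists $\mathcal L''\subseteq\mathcal L'$ with $|\mathcal L''|\le 1/\eta$ which is a $(2\zeta)$-cover of $\mathcal L$.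
   Context: For $z,z'\in\mathbb F_2^m$, $\Delta(z,z')=|\{i: z_i\neq z'_i\}|/m$ is the relative Hamming distance, and $\mathrm{bias}(z)=|\mathbb E_{i\in[m]}(-1)^{z_i}|$. A code $\mathcal C$ is $\varepsilon$-balanced if $\mathrm{bias}(z+z')\le\varepsilon$ for all distinct $z,z'\in\mathcal C$. For $W(k)\subseteq[n]^k$ and $z\in\mathbb F_2^n$, the direct sum lifting $\mathrm{dsum}_{W(k)}(z)\in\mathbb F_2^{W(k)}$ has coordinates $y_{\mathfrak s}=\sum_{i\in\mathfrak s} z_i$ for $\mathfrak s\in W(k)$ (sum over the entries of the tuple), and $\mathrm{dsum}_{W(k)}(\mathcal C)=\{\mathrm{dsum}_{W(k)}(z):z\in\mathcal C\}$. $W(k)$ is an $(\varepsilon_0,\varepsilon)$-parity sampler if every $z\in\mathbb F_2^n$ with $\mathrm{bias}(z)\le\varepsilon_0$ satisfies $\mathrm{bias}(\mathrm{dsum}_{W(k)}(z))\le\varepsilon$. Given a set $\mathcal L=\{(z,\mathrm{dsum}_{W(k)}(z)): z\in A\}$ with $A\subseteq\mathcal C$, a set $\mathcal L'=\{(z^{(j)},\mathrm{dsum}_{W(k)}(z^{(j)}))\}_{j=1}^m$ with $z^{(j)}\in\mathbb F_2^n$ is a $\zeta$-cover of $\mathcal L$ if for every $(z,y)\in\mathcal L$ there is $(z',y')\in\mathcal L'$ with $\mathrm{bias}(z-z')>1-2\zeta$ (i.e. $\Delta(z,z')<\zeta$ or $\Delta(z,z')>1-\zeta$). *)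

theory Defs
  imports Complex_Main
begin

text \<open>Vectors in F_2^m are represented as bool lists of length m (True = 1).
  Addition (= subtraction) in F_2^m is coordinatewise xor.\<close>

definition vadd :: "bool list \<Rightarrow> bool list \<Rightarrow> bool list" where
  "vadd x y = map2 (\<noteq>) x y"

definition hdist :: "bool list \<Rightarrow> bool list \<Rightarrow> real" where
  "hdist x y = real (card {i. i < length x \<and> x ! i \<noteq> y ! i}) / real (length x)"

definition bias :: "bool list \<Rightarrow> real" where
  "bias z = \<bar>(\<Sum>i<length z. (if z ! i then -1 else 1 :: real)) / real (length z)\<bar>"

definition balanced :: "real \<Rightarrow> bool list set \<Rightarrow> bool" where
  "balanced eps C \<longleftrightarrow> (\<forall>z\<in>C. \<forall>z'\<in>C. z \<noteq> z' \<longrightarrow> bias (vadd z z') \<le> eps)"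

definition linear_code :: "nat \<Rightarrow> bool list set \<Rightarrow> bool" where
  "linear_code n C \<longleftrightarrow> C \<subseteq> {z. length z = n} \<and> replicate n False \<in> C \<and>
     (\<forall>x\<in>C. \<forall>y\<in>C. vadd x y \<in> C)"

text \<open>The (multi)set W(k) is a list of k-tuples (lists) over [n] = {0..<n};
  the coordinates of the lifted word are indexed by the entries of W (with multiplicity).
  y_s = sum over the entries i of s of z_i (in F_2).\<close>
definition dsum :: "nat list list \<Rightarrow> bool list \<Rightarrow> bool list" where
  "dsum W z = map (\<lambda>s. odd (length (filter (\<lambda>i. z ! i) s))) W"

definition parity_sampler :: "nat \<Rightarrow> nat list list \<Rightarrow> real \<Rightarrow> real \<Rightarrow> bool" where
  "parity_sampler n W eps0 eps \<longleftrightarrow>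
     (\<forall>z. length z = n \<longrightarrow> bias z \<le> eps0 \<longrightarrow> bias (dsum W z) \<le> eps)"

definition list_L :: "nat list list \<Rightarrow> bool list \<Rightarrow> bool list set \<Rightarrow> real \<Rightarrow>
    (bool list \<times> bool list) set" where
  "list_L W ytil C eta =
     {(z, dsum W z) | z. z \<in> C \<and> hdist (dsum W z) ytil \<le> 1/2 - sqrt eta}"

definition is_cover :: "nat \<Rightarrow> nat list list \<Rightarrow> real \<Rightarrow> (bool list \<times> bool list) set \<Rightarrow>
    (bool list \<times> bool list) set \<Rightarrow> bool" where
  "is_cover n W zeta L L' \<longleftrightarrow>
     (\<forall>(z', y') \<in> L'. length z' = n \<and> y' = dsum W z') \<and>
     (\<forall>(z, y) \<in> L. \<exists>(z', y') \<in> L'. bias (vadd z z') > 1 - 2 * zeta)"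

end

theory Submission
  imports Defs "HOL-Analysis.Convex"
begin

text \<open>Pick a maximal subfamily S of L' whose messages are pairwise not (1 - 2 zeta)-correlated.
  By maximality every member of L' is zeta-close to a member of S, and closeness composes
  like a triangle inequality up to complementation, so S is a (2 zeta)-cover.  The parity
  sampler turns the pairwise far messages of S into lifted words of pairwise bias at most eta,
  all lying within 1/2 - sqrt eta of the received word; viewed as sign vectors they form a
  Johnson-type configuration: summing their correlations with the received word and applying
  Cauchy-Schwarz gives eta |S| \<le> 1.\<close>

definition hamming :: "nat \<Rightarrow> bool list \<Rightarrow> bool list \<Rightarrow> real" where
  "hamming m x y = (\<Sum>i<m. if x ! i \<noteq> y ! i then 1 else 0)"

definition near :: "real \<Rightarrow> bool list \<Rightarrow> bool list \<Rightarrow> bool" where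
  "near zeta x y \<longleftrightarrow> 1 - 2 * zeta < bias (vadd x y)"

lemma length_vadd: "length (vadd x y) = min (length x) (length y)"
  by (simp add: vadd_def)

lemma nth_vadd: "i < length x \<Longrightarrow> i < length y \<Longrightarrow> vadd x y ! i = (x ! i \<noteq> y ! i)"
  by (simp add: vadd_def)

lemma vadd_commute: "vadd x y = vadd y x"
  unfolding vadd_def by (subst zip_commute) (auto simp: map_map)

lemma length_dsum: "length (dsum W z) = length W"
  by (simp add: dsum_def)

lemma odd_length_filter_xor:
  "odd (length (filter (\<lambda>i. P i \<noteq> Q i) s)) \<longleftrightarrow>
     odd (length (filter P s)) \<noteq> odd (length (filter Q s))"
  by (induction s) auto

lemma dsum_vadd:
  assumes "length x = n" "length y = n" "\<forall>s\<in>set W. set s \<subseteq> {..<n}"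
  shows "dsum W (vadd x y) = vadd (dsum W x) (dsum W y)"
proof (rule nth_equalityI)
  show "length (dsum W (vadd x y)) = length (vadd (dsum W x) (dsum W y))"
    by (simp add: length_dsum length_vadd)
next
  fix j assume "j < length (dsum W (vadd x y))"
  then have j: "j < length W" by (simp add: length_dsum)
  then have "set (W ! j) \<subseteq> {..<n}" using assms(3) by auto
  then have "filter ((!) (vadd x y)) (W ! j) = filter (\<lambda>i. x ! i \<noteq> y ! i) (W ! j)"
    using assms by (intro filter_cong) (auto simp: nth_vadd)
  then show "dsum W (vadd x y) ! j = vadd (dsum W x) (dsum W y) ! j"
    using j odd_length_filter_xor[of "(!) x" "(!) y"] by (simp add: dsum_def nth_vadd length_dsum)
qed

lemma hamming_commute: "hamming m x y = hamming m y x"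
  unfolding hamming_def by (rule sum.cong) auto

lemma hamming_triangle: "hamming m x z \<le> hamming m x y + hamming m y z"
  unfolding hamming_def by (simp only: sum.distrib[symmetric], rule sum_mono) auto

lemma hamming_perimeter: "hamming m x y + hamming m y z + hamming m x z \<le> 2 * real m"
proof -
  have "hamming m x y + hamming m y z + hamming m x z \<le> (\<Sum>i<m. 2)"
    unfolding hamming_def by (simp only: sum.distrib[symmetric], rule sum_mono) auto
  then show ?thesis by simp
qed

lemma card_less_filter_eq_sum:
  fixes m :: nat
  shows "real (card {i. i < m \<and> P i}) = (\<Sum>i<m. if P i then 1 else 0)"
proof (induction m)
  case 0
  then show ?case by simp
next
  case (Suc m)
  have "{i. i < Suc m \<and> P i} = (if P m then insert m {i. i < m \<and> P i} else {i. i < m \<and> P i})"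
    by (auto simp: less_Suc_eq)
  with Suc show ?case by simp
qed

lemma hdist_eq_hamming: "length x = m \<Longrightarrow> hdist x y = hamming m x y / real m"
  unfolding hdist_def hamming_def using card_less_filter_eq_sum[of m "\<lambda>i. x ! i \<noteq> y ! i"] by simp

lemma sum_sign_products_eq_hamming:
  "(\<Sum>i<m. (if x ! i then -1 else 1) * (if y ! i then -1 else 1 :: real)) = real m - 2 * hamming m x y"
  unfolding hamming_def by (induction m) auto

lemma bias_vadd_eq_hamming:
  assumes "length x = m" "length y = m"
  shows "bias (vadd x y) = \<bar>real m - 2 * hamming m x y\<bar> / real m"
proof -
  have "(\<Sum>i<m. if vadd x y ! i then -1 else 1 :: real)
      = (\<Sum>i<m. (if x ! i then -1 else 1) * (if y ! i then -1 else 1 :: real))"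
    using assms by (intro sum.cong) (auto simp: nth_vadd)
  then show ?thesis
    unfolding bias_def using assms by (simp add: length_vadd sum_sign_products_eq_hamming)
qed

lemma bias_le_one: "bias z \<le> 1"
proof -
  have "\<bar>\<Sum>i<length z. if z ! i then -1 else 1 :: real\<bar> \<le> (\<Sum>i<length z. 1)"
    by (rule order_trans[OF sum_abs sum_mono]) auto
  then show ?thesis
    unfolding bias_def by (cases "length z = 0") (auto simp: divide_le_eq_1)
qed

lemma near_iff_hamming:
  assumes "length x = m" "length y = m" "0 < m"
  shows "near zeta x y \<longleftrightarrow> (1 - 2 * zeta) * real m < \<bar>real m - 2 * hamming m x y\<bar>"
  using assms by (simp add: near_def bias_vadd_eq_hamming pos_less_divide_eq)

lemma near_commute: "near zeta x y \<longleftrightarrow> near zeta y x"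
  by (simp add: near_def vadd_commute)

lemma near_pos: "near zeta x y \<Longrightarrow> 0 < zeta"
  using bias_le_one[of "vadd x y"] by (simp add: near_def)

lemma near_mono: "near a x y \<Longrightarrow> a \<le> b \<Longrightarrow> near b x y"
  by (simp add: near_def)

text \<open>A close pair has Hamming distance below a or above m - a; the three cases are
  combined with the triangle inequality and the perimeter bound.\<close>
lemma near_trans:
  assumes "length x = m" "length y = m" "length z = m" "0 < m"
    and "near a x y" "near b y z"
  shows "near (a + b) x z"
proof -
  define h1 h2 h3 where "h1 = hamming m x y" and "h2 = hamming m y z" and "h3 = hamming m x z"
  have xy: "h1 < a * m \<or> real m - a * m < h1" and yz: "h2 < b * m \<or> real m - b * m < h2"
    using assms by (auto simp: near_iff_hamming h1_def h2_def abs_if algebra_simps split: if_splits)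
  have "h3 \<le> h1 + h2"
    unfolding h1_def h2_def h3_def by (rule hamming_triangle)
  moreover have "h1 \<le> h2 + h3"
    using hamming_triangle[where m = m and x = x and y = z and z = y] hamming_commute[of m y z]
    unfolding h1_def h2_def h3_def by linarith
  moreover have "h2 \<le> h1 + h3"
    using hamming_triangle[where m = m and x = y and y = x and z = z] hamming_commute[of m x y]
    unfolding h1_def h2_def h3_def by linarith
  moreover have "h1 + h2 + h3 \<le> 2 * real m"
    unfolding h1_def h2_def h3_def by (rule hamming_perimeter)
  ultimately have "(1 - 2 * (a + b)) * real m < \<bar>real m - 2 * h3\<bar>"
    using xy yz by (auto simp: abs_if algebra_simps)
  then show ?thesis using assms by (simp add: near_iff_hamming h3_def)
qed

lemma exists_maximal_independent_subset:
  fixes R :: "'a \<Rightarrow> 'a \<Rightarrow> bool"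
  assumes "finite A" and sym: "\<And>x y. R x y \<Longrightarrow> R y x"
  shows "\<exists>S\<subseteq>A. (\<forall>x\<in>S. \<forall>y\<in>S. x \<noteq> y \<longrightarrow> \<not> R x y) \<and> (\<forall>x\<in>A. \<exists>s\<in>S. x = s \<or> R x s)"
  using assms(1)
proof (induction A rule: finite_induct)
  case (insert a A)
  then obtain S where S: "S \<subseteq> A" "\<forall>x\<in>S. \<forall>y\<in>S. x \<noteq> y \<longrightarrow> \<not> R x y"
    "\<forall>x\<in>A. \<exists>s\<in>S. x = s \<or> R x s" by blast
  show ?case
  proof (cases "\<exists>s\<in>S. R a s")
    case True
    with S show ?thesis by (intro exI[of _ S]) auto
  next
    case False
    with S sym show ?thesis by (intro exI[of _ "insert a S"]) blast
  qed
qed simp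

lemma gram_sum_le:
  fixes u :: "'a \<Rightarrow> nat \<Rightarrow> real"
  assumes "finite S"
    and unit: "\<And>p i. p \<in> S \<Longrightarrow> i < m \<Longrightarrow> u p i * u p i = 1"
    and corr: "\<And>p q. p \<in> S \<Longrightarrow> q \<in> S \<Longrightarrow> p \<noteq> q \<Longrightarrow> (\<Sum>i<m. u p i * u q i) \<le> eta * real m"
  shows "(\<Sum>i<m. (\<Sum>p\<in>S. u p i)\<^sup>2) \<le> real (card S) * (real m + (real (card S) - 1) * (eta * real m))"
proof -
  have row: "(\<Sum>q\<in>S. \<Sum>i<m. u p i * u q i) \<le> real m + (real (card S) - 1) * (eta * real m)"
    if p: "p \<in> S" for p
  proof -
    have "(\<Sum>q\<in>S. \<Sum>i<m. u p i * u q i)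
        = (\<Sum>i<m. u p i * u p i) + (\<Sum>q\<in>S - {p}. \<Sum>i<m. u p i * u q i)"
      using assms(1) p by (simp add: sum.remove)
    also have "(\<Sum>i<m. u p i * u p i) = real m"
      using unit p by simp
    also have "(\<Sum>q\<in>S - {p}. \<Sum>i<m. u p i * u q i) \<le> real (card (S - {p})) * (eta * real m)"
      using corr p by (intro sum_bounded_above) auto
    also have "real (card (S - {p})) = real (card S) - 1"
      using assms(1) p card_gt_0_iff[of S] by (auto simp: card_Diff_singleton of_nat_diff)
    finally show ?thesis by simp
  qed
  have "(\<Sum>i<m. (\<Sum>p\<in>S. u p i)\<^sup>2) = (\<Sum>i<m. \<Sum>p\<in>S. \<Sum>q\<in>S. u p i * u q i)"
    by (simp add: power2_eq_square sum_product)
  also have "\<dots> = (\<Sum>p\<in>S. \<Sum>q\<in>S. \<Sum>i<m. u p i * u q i)"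
    by (simp add: sum.swap[of _ "{..<m}"])
  also have "\<dots> \<le> (\<Sum>p\<in>S. real m + (real (card S) - 1) * (eta * real m))"
    using row by (rule sum_mono)
  finally show ?thesis by simp
qed

text \<open>In the application u p is a lifted word times the received word, coordinatewise in signs.\<close>
lemma johnson_bound:
  fixes u :: "'a \<Rightarrow> nat \<Rightarrow> real"
  assumes "finite S" "0 < m" "0 < eta"
    and large: "\<And>p. p \<in> S \<Longrightarrow> 2 * sqrt eta * real m \<le> (\<Sum>i<m. u p i)"
    and unit: "\<And>p i. p \<in> S \<Longrightarrow> i < m \<Longrightarrow> u p i * u p i = 1"
    and corr: "\<And>p q. p \<in> S \<Longrightarrow> q \<in> S \<Longrightarrow> p \<noteq> q \<Longrightarrow> (\<Sum>i<m. u p i * u q i) \<le> eta * real m"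
  shows "real (card S) \<le> 1 / eta"
proof (cases "S = {}")
  case False
  define N where "N = real (card S)"
  have N: "1 \<le> N" using False assms(1) by (simp add: N_def Suc_le_eq card_gt_0_iff)
  define T where "T = (\<Sum>i<m. \<Sum>p\<in>S. u p i)"
  have "N * (2 * sqrt eta * real m) \<le> T"
    using sum_mono[of S "\<lambda>_. 2 * sqrt eta * real m" "\<lambda>p. \<Sum>i<m. u p i"] large
    by (simp add: T_def N_def sum.swap[of _ "{..<m}"])
  then have "(N * (2 * sqrt eta * real m))\<^sup>2 \<le> T\<^sup>2"
    using N assms(3) by (intro power_mono) auto
  also have "T\<^sup>2 \<le> (\<Sum>i<m. (\<Sum>p\<in>S. u p i)\<^sup>2) * real m"
    using sum_squared_le_sum_of_squares[of "\<lambda>i. \<Sum>p\<in>S. u p i" "{..<m}"] by (simp add: T_def)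
  also have "\<dots> \<le> N * (real m + (N - 1) * (eta * real m)) * real m"
    using gram_sum_le[OF assms(1) unit corr] by (simp add: N_def mult_right_mono)
  finally have "N\<^sup>2 * 4 * eta * (real m)\<^sup>2 \<le> N * (real m + (N - 1) * (eta * real m)) * real m"
    using assms(3) by (simp add: power_mult_distrib)
  then have "(N * (real m)\<^sup>2) * (4 * eta * N) \<le> (N * (real m)\<^sup>2) * (1 + (N - 1) * eta)"
    by (simp add: algebra_simps power2_eq_square)
  then have "4 * eta * N \<le> 1 + (N - 1) * eta"
    using N assms(2) by (simp add: mult_le_cancel_left_pos)
  then show ?thesis
    using assms(3) N by (simp add: N_def field_simps)
qed (use assms(3) in simp)

lemma johnson_bound_words:
  fixes f :: "'a \<Rightarrow> bool list"
  assumes "finite S" "0 < eta" "0 < length ytil"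
    and len: "\<And>p. p \<in> S \<Longrightarrow> length (f p) = length ytil"
    and dist: "\<And>p. p \<in> S \<Longrightarrow> hdist (f p) ytil \<le> 1/2 - sqrt eta"
    and bias: "\<And>p q. p \<in> S \<Longrightarrow> q \<in> S \<Longrightarrow> p \<noteq> q \<Longrightarrow> bias (vadd (f p) (f q)) \<le> eta"
  shows "real (card S) \<le> 1 / eta"
proof -
  define m where "m = length ytil"
  define sgn :: "bool list \<Rightarrow> nat \<Rightarrow> real" where "sgn x i = (if x ! i then -1 else 1)" for x i
  have sgn_sq: "sgn x i * sgn x i = 1" for x i by (simp add: sgn_def)
  show ?thesis
  proof (rule johnson_bound[OF assms(1) _ assms(2), where m = m and u = "\<lambda>p i. sgn (f p) i * sgn ytil i"])
    fix p assume p: "p \<in> S"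
    have "hamming m (f p) ytil \<le> (1/2 - sqrt eta) * real m"
      using dist[OF p] hdist_eq_hamming[OF len[OF p]] assms(3) by (simp add: m_def divide_le_eq)
    then show "2 * sqrt eta * real m \<le> (\<Sum>i<m. sgn (f p) i * sgn ytil i)"
      using sum_sign_products_eq_hamming[where m = m and x = "f p" and y = ytil] by (simp add: sgn_def algebra_simps)
  next
    fix p q assume p: "p \<in> S" and q: "q \<in> S" and "p \<noteq> q"
    then have "\<bar>real m - 2 * hamming m (f p) (f q)\<bar> \<le> eta * real m"
      using bias[OF p q \<open>p \<noteq> q\<close>] bias_vadd_eq_hamming[OF len[OF p] len[OF q]] assms(3) by (simp add: m_def divide_le_eq)
    moreover have "(\<Sum>i<m. sgn (f p) i * sgn ytil i * (sgn (f q) i * sgn ytil i))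
        = (\<Sum>i<m. sgn (f p) i * sgn (f q) i)"
      by (intro sum.cong) (auto simp: sgn_def)
    ultimately show "(\<Sum>i<m. sgn (f p) i * sgn ytil i * (sgn (f q) i * sgn ytil i)) \<le> eta * real m"
      using sum_sign_products_eq_hamming[where m = m and x = "f p" and y = "f q"] by (simp add: sgn_def)
  qed (use assms(3) sgn_sq in \<open>simp_all add: m_def algebra_simps\<close>)
qed

lemma parity_sampler_far:
  assumes "parity_sampler n W (1 - 2 * zeta) eta" "\<forall>s\<in>set W. set s \<subseteq> {..<n}"
    and "length x = n" "length y = n" "\<not> near zeta x y"
  shows "bias (vadd (dsum W x) (dsum W y)) \<le> eta"
  using assms by (simp add: parity_sampler_def near_def dsum_vadd[symmetric] length_vadd)

lemma card_pairwise_far_le: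
  assumes "finite S" "0 < eta" "W \<noteq> []" "length ytil = length W"
    and sampler: "parity_sampler n W (1 - 2 * zeta) eta" and idx: "\<forall>s\<in>set W. set s \<subseteq> {..<n}"
    and words: "\<And>p. p \<in> S \<Longrightarrow> length (fst p) = n \<and> snd p = dsum W (fst p)"
    and close: "\<And>p. p \<in> S \<Longrightarrow> hdist (snd p) ytil \<le> 1/2 - sqrt eta"
    and far: "\<And>p q. p \<in> S \<Longrightarrow> q \<in> S \<Longrightarrow> p \<noteq> q \<Longrightarrow> \<not> near zeta (fst p) (fst q)"
  shows "real (card S) \<le> 1 / eta"
proof (rule johnson_bound_words[OF assms(1,2), where f = snd])
  show "0 < length ytil"
    using assms(3,4) by simp
next
  fix p assume "p \<in> S"
  then show "length (snd p) = length ytil" "hdist (snd p) ytil \<le> 1/2 - sqrt eta"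
    using words close assms(4) by (simp_all add: length_dsum)
next
  fix p q assume pq: "p \<in> S" "q \<in> S" "p \<noteq> q"
  have "bias (vadd (dsum W (fst p)) (dsum W (fst q))) \<le> eta"
    using parity_sampler_far[OF sampler idx _ _ far[OF pq]] words pq(1,2) by blast
  then show "bias (vadd (snd p) (snd q)) \<le> eta"
    using words pq(1,2) by simp
qed

lemma is_cover_double:
  assumes cover: "is_cover n W zeta L L'" and "0 < n" and "S \<subseteq> L'"
    and len: "\<forall>(z, y)\<in>L. length z = n"
    and dom: "\<forall>p\<in>L'. \<exists>s\<in>S. p = s \<or> near zeta (fst p) (fst s)"
  shows "is_cover n W (2 * zeta) L S"
proof -
  have words: "\<forall>(z', y')\<in>L'. length z' = n \<and> y' = dsum W z'"
    using cover unfolding is_cover_def by (rule conjunct1)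
  have covered: "\<forall>(z, y)\<in>L. \<exists>(z', y')\<in>L'. 1 - 2 * zeta < bias (vadd z z')"
    using cover unfolding is_cover_def by (rule conjunct2)
  have "\<exists>s\<in>S. 1 - 2 * (2 * zeta) < bias (vadd z (fst s))" if zy: "(z, y) \<in> L" for z y
  proof -
    have lz: "length z = n"
      using len zy by auto
    obtain p where p: "p \<in> L'" "near zeta z (fst p)"
      using bspec[OF covered zy] unfolding near_def by (auto simp: case_prod_beta)
    obtain s where s: "s \<in> S" "p = s \<or> near zeta (fst p) (fst s)"
      using dom p(1) by blast
    have lp: "length (fst p) = n" and ls: "length (fst s) = n"
      using bspec[OF words p(1)] bspec[OF words subsetD[OF \<open>S \<subseteq> L'\<close> s(1)]]
      by (simp_all add: case_prod_beta)
    from s(2) have "near (2 * zeta) z (fst s)"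
    proof
      assume "p = s"
      then show ?thesis
        using near_mono[OF p(2), of "2 * zeta"] near_pos[OF p(2)] by simp
    next
      assume "near zeta (fst p) (fst s)"
      then show ?thesis
        using near_trans[OF lz lp ls \<open>0 < n\<close> p(2)] by (metis mult_2)
    qed
    with s(1) show ?thesis
      unfolding near_def by blast
  qed
  then show ?thesis
    using words \<open>S \<subseteq> L'\<close> unfolding is_cover_def by fastforce
qed

theorem mainTheorem1:
  fixes n k :: nat and W :: "nat list list" and C :: "bool list set"
    and eta0 eta zeta :: real and ytil :: "bool list"
    and L' :: "(bool list \<times> bool list) set"
  assumes "n \<ge> 1" and "k \<ge> 1"
    and "W \<noteq> []"
    and "\<forall>s\<in>set W. length s = k \<and> set s \<subseteq> {..<n}"
    and "linear_code n C" and "balanced eta0 C"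
    and "balanced eta (dsum W ` C)"
    and "0 < eta" and "eta < 1"
    and "length ytil = length W"
    and "zeta < 1/2"
    and "finite L'"
    and "is_cover n W zeta (list_L W ytil C eta) L'"
    and "\<forall>(z', y') \<in> L'. hdist y' ytil \<le> 1/2 - sqrt eta"
    and "parity_sampler n W (1 - 2 * zeta) eta"
  shows "\<exists>L'' \<subseteq> L'. real (card L'') \<le> 1 / eta \<and>
           is_cover n W (2 * zeta) (list_L W ytil C eta) L''"
proof -
  have words: "length (fst p) = n" "snd p = dsum W (fst p)" if "p \<in> L'" for p
    using bspec[OF assms(13)[unfolded is_cover_def, THEN conjunct1] that] by (simp_all add: case_prod_beta)
  obtain S where S: "S \<subseteq> L'" "\<forall>p\<in>S. \<forall>q\<in>S. p \<noteq> q \<longrightarrow> \<not> near zeta (fst p) (fst q)"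
    "\<forall>p\<in>L'. \<exists>s\<in>S. p = s \<or> near zeta (fst p) (fst s)"
    using exists_maximal_independent_subset[where R = "\<lambda>p q. near zeta (fst p) (fst q)", OF assms(12)]
    by (auto simp: near_commute)
  have "real (card S) \<le> 1 / eta"
  proof (rule card_pairwise_far_le[OF finite_subset[OF S(1) assms(12)] assms(8,3,10,15)])
    show "\<forall>s\<in>set W. set s \<subseteq> {..<n}"
      using assms(4) by blast
  next
    fix p assume "p \<in> S"
    then have "p \<in> L'"
      using S(1) by blast
    then show "length (fst p) = n \<and> snd p = dsum W (fst p)" "hdist (snd p) ytil \<le> 1/2 - sqrt eta"
      using words bspec[OF assms(14)] by (auto simp: case_prod_beta)
  qed (use S(2) in blast)
  moreover have "is_cover n W (2 * zeta) (list_L W ytil C eta) S"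
  proof (rule is_cover_double[OF assms(13) _ S(1) _ S(3)])
    show "0 < n" using assms(1) by simp
    show "\<forall>(z, y)\<in>list_L W ytil C eta. length z = n"
      using assms(5) by (auto simp: list_L_def linear_code_def)
  qed
  ultimately show ?thesis using S(1) by blast
qed

end
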